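(* Let $q\in\,]0,1[$, $\omega\ge0$, let $I$ be an interval containing $\omega_0:=\omega/(1-q)$, $\alpha,\beta\in\mathbb{R}$, and suppose $a,b\in I$ with $a<b$ and $a,b\in[c]_{q,\omega}$ for some $c\in I$. Let $L:I\times\mathbb{R}\times\mathbb{R}\to\mathbb{R}$ satisfy: (H1) for every $t\in I$, $(u,v)\mapsto L(t,u,v)$ is $C^1(\mathbb{R}^2,\mathbb{R})$; (H2) for every admissible $y$, $t\mapsto L(t,y(\sigma(t)),\tilde D_{q,\omega}[y](t))$ is continuous at $\omega_0$; (H3) for every admissible $y$, $t\mapsto\partial_2L(t,y(\sigma(t)),\tilde D_{q,\omega}[y](t))$ and $t\mapsto\partial_3L(t,y(\sigma(t)),\tilde D_{q,\omega}[y](t))$ belong to $\mathcal{Y}^1([a,b]_{q,\omega},\mathbb{R})$. Assume $L$ is jointly convex (resp. jointly concave) in $(u,v)$. If an admissible function $y_*$ satisfies, for all $t\in[a,b]_{q,\omega}$, $$\partial_2L\bigl(t,y_*(\sigma(t)),\tilde D_{q,\omega}[y_*](t)\bigr)=\tilde D_{q,\omega}\Bigl[\tau\mapsto\partial_3L\bigl(\sigma(\tau),y_*(\sigma^2(\tau)),\tilde D_{q,\omega}[y_*](\sigma(\tau))\bigr)\Bigr](t),$$ then $y_*$ is a global minimizer (resp. maximizer) of problem (P), i.e. $\mathcal{L}(y_* )\le\mathcal{L}(y)$ (resp. $\ge$) for every admissible $y$.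
   Context: $\sigma(t):=qt+\omega$, $\sigma^{-1}(t):=q^{-1}(t-\omega)$, $\sigma^k$ the $k$-fold composition. Hahn symmetric derivative: for $t\neq\omega_0$, $\tilde D_{q,\omega}[f](t):=\frac{f(\sigma(t))-f(\sigma^{-1}(t))}{\sigma(t)-\sigma^{-1}(t)}$; $\tilde D_{q,\omega}[f](\omega_0):=f'(\omega_0)$ (classical). Hahn symmetric integral: $\int_{\omega_0}^xF\,\tilde d_{q,\omega}t:=(\sigma^{-1}(x)-\sigma(x))\sum_{n\ge0}q^{2n+1}F(\sigma^{2n+1}(x))$, $\int_a^bF\,\tilde d_{q,\omega}t:=\int_{\omega_0}^bF\,\tilde d_{q,\omega}t-\int_{\omega_0}^aF\,\tilde d_{q,\omega}t$. $[s]_{q,\omega}:=\{\sigma^{2n+1}(s):n\in\mathbb{N}_0\}\cup\{\omega_0\}$, $[a,b]_{q,\omega}:=[a]_{q,\omega}\cup[b]_{q,\omega}$. $\mathcal{Y}^1([a,b]_{q,\omega},\mathbb{R})$: functions $y:I\to\mathbb{R}$ with $y$ and $\tilde D_{q,\omega}[y]$ bounded on $[a,b]_{q,\omega}$ and continuous at $\omega_0$. Problem (P): extremize $\mathcal{L}(y):=\int_a^bL(t,y(\sigma(t)),\tilde D_{q,\omega}[y](t))\,\tilde d_{q,\omega}t$ over admissible $y$, i.e. $y\in\mathcal{Y}^1([a,b]_{q,\omega},\mathbb{R})$ with $y(a)=\alpha$, $y(b)=\beta$. $L$ is jointly convex (resp. concave) in $(u,v)$ if $\partial_2L,\partial_3L$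 exist, are continuous, and $L(t,u+u_1,v+v_1)-L(t,u,v)\ge$ (resp. $\le$) $\partial_2L(t,u,v)u_1+\partial_3L(t,u,v)v_1$ for all $(t,u,v),(t,u+u_1,v+v_1)\in I\times\mathbb{R}^2$. $\partial_jL$ is the partial derivative in the $j$-th argument. *)

theory Defs
  imports "HOL-Analysis.Analysis"
begin

definition hsig :: "real \<Rightarrow> real \<Rightarrow> real \<Rightarrow> real" where
  "hsig q \<omega> t = q * t + \<omega>"

definition hsig_inv :: "real \<Rightarrow> real \<Rightarrow> real \<Rightarrow> real" where
  "hsig_inv q \<omega> t = (t - \<omega>) / q"

definition hom0 :: "real \<Rightarrow> real \<Rightarrow> real" where
  "hom0 q \<omega> = \<omega> / (1 - q)"

definition hahnD :: "real \<Rightarrow> real \<Rightarrow> real set \<Rightarrow> (real \<Rightarrow> real) \<Rightarrow> real \<Rightarrow> real" where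
  "hahnD q \<omega> I f t =
     (if t = hom0 q \<omega> then (SOME d. (f has_real_derivative d) (at t within I))
      else (f (hsig q \<omega> t) - f (hsig_inv q \<omega> t)) / (hsig q \<omega> t - hsig_inv q \<omega> t))"

definition hahn_int0 :: "real \<Rightarrow> real \<Rightarrow> (real \<Rightarrow> real) \<Rightarrow> real \<Rightarrow> real" where
  "hahn_int0 q \<omega> F x =
     (hsig_inv q \<omega> x - hsig q \<omega> x) *
       (\<Sum>n. q ^ (2 * n + 1) * F ((hsig q \<omega> ^^ (2 * n + 1)) x))"

definition hahn_int :: "real \<Rightarrow> real \<Rightarrow> (real \<Rightarrow> real) \<Rightarrow> real \<Rightarrow> real \<Rightarrow> real" where
  "hahn_int q \<omega> F a b = hahn_int0 q \<omega> F b - hahn_int0 q \<omega> F a"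

definition qset :: "real \<Rightarrow> real \<Rightarrow> real \<Rightarrow> real set" where
  "qset q \<omega> s = {(hsig q \<omega> ^^ (2 * n + 1)) s | n. True} \<union> {hom0 q \<omega>}"

definition qint :: "real \<Rightarrow> real \<Rightarrow> real \<Rightarrow> real \<Rightarrow> real set" where
  "qint q \<omega> a b = qset q \<omega> a \<union> qset q \<omega> b"

text \<open>The class Y^1([a,b]_{q,omega}, R).  Differentiability at omega0 is
  required so that the Hahn derivative at omega0 is defined.\<close>
definition Y1 :: "real \<Rightarrow> real \<Rightarrow> real set \<Rightarrow> real \<Rightarrow> real \<Rightarrow> (real \<Rightarrow> real) \<Rightarrow> bool" where
  "Y1 q \<omega> I a b y \<longleftrightarrow>
     y differentiable (at (hom0 q \<omega>) within I) \<and>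
     bounded (y ` qint q \<omega> a b) \<and>
     bounded (hahnD q \<omega> I y ` qint q \<omega> a b) \<and>
     continuous (at (hom0 q \<omega>) within I) y \<and>
     continuous (at (hom0 q \<omega>) within I) (hahnD q \<omega> I y)"

definition admissible :: "real \<Rightarrow> real \<Rightarrow> real set \<Rightarrow> real \<Rightarrow> real \<Rightarrow> real \<Rightarrow> real
     \<Rightarrow> (real \<Rightarrow> real) \<Rightarrow> bool" where
  "admissible q \<omega> I a b \<alpha> \<beta> y \<longleftrightarrow> Y1 q \<omega> I a b y \<and> y a = \<alpha> \<and> y b = \<beta>"

definition functionalL :: "real \<Rightarrow> real \<Rightarrow> real set \<Rightarrow> (real \<Rightarrow> real \<Rightarrow> real \<Rightarrow> real)
     \<Rightarrow> real \<Rightarrow> real \<Rightarrow> (real \<Rightarrow> real) \<Rightarrow> real" where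
  "functionalL q \<omega> I L a b y =
     hahn_int q \<omega> (\<lambda>t. L t (y (hsig q \<omega> t)) (hahnD q \<omega> I y t)) a b"

definition part2 :: "(real \<Rightarrow> real \<Rightarrow> real \<Rightarrow> real) \<Rightarrow> real \<Rightarrow> real \<Rightarrow> real \<Rightarrow> real" where
  "part2 L t u v = deriv (\<lambda>u'. L t u' v) u"

definition part3 :: "(real \<Rightarrow> real \<Rightarrow> real \<Rightarrow> real) \<Rightarrow> real \<Rightarrow> real \<Rightarrow> real \<Rightarrow> real" where
  "part3 L t u v = deriv (\<lambda>v'. L t u v') v"

definition C1_R2 :: "(real \<times> real \<Rightarrow> real) \<Rightarrow> bool" where
  "C1_R2 f \<longleftrightarrow> (\<exists>D. (\<forall>p. (f has_derivative D p) (at p)) \<and>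
                     (\<forall>h. continuous_on UNIV (\<lambda>p. D p h)))"

definition jointly_convex :: "real set \<Rightarrow> (real \<Rightarrow> real \<Rightarrow> real \<Rightarrow> real) \<Rightarrow> bool" where
  "jointly_convex I L \<longleftrightarrow>
     (\<forall>t\<in>I. \<forall>u v u1 v1. L t (u + u1) (v + v1) - L t u v \<ge> part2 L t u v * u1 + part3 L t u v * v1)"

definition jointly_concave :: "real set \<Rightarrow> (real \<Rightarrow> real \<Rightarrow> real \<Rightarrow> real) \<Rightarrow> bool" where
  "jointly_concave I L \<longleftrightarrow>
     (\<forall>t\<in>I. \<forall>u v u1 v1. L t (u + u1) (v + v1) - L t u v \<le> part2 L t u v * u1 + part3 L t u v * v1)"

end

theory Submission
  imports Defs
begin

text \<open>The Hahn integral from \<open>\<omega>\<^sub>0\<close> to \<open>x\<close> samples the orbit \<open>\<sigma>\<^sup>2\<^sup>n\<^sup>+\<^sup>1(x)\<close>, which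
  converges geometrically to the fixed point \<open>\<omega>\<^sub>0\<close> of \<open>\<sigma>\<close>. Along this orbit a telescoping sum
  gives the fundamental theorem \<open>\<integral>\<^sub>\<omega>\<^sub>0\<^sup>x D[g] = g(x) - g(\<omega>\<^sub>0)\<close> for \<open>g\<close> continuous at \<open>\<omega>\<^sub>0\<close>,
  and a product rule turns the Euler--Lagrange equation into the statement that the first
  variation \<open>\<partial>\<^sub>2L\<cdot>h(\<sigma>t) + \<partial>\<^sub>3L\<cdot>D[h](t)\<close> is the Hahn derivative of
  \<open>\<tau> \<mapsto> \<partial>\<^sub>3L(\<sigma>\<tau>, \<dots>)\<cdot>h(\<tau>)\<close>. For \<open>h = y - y\<^sub>*\<close>, which vanishes at \<open>a\<close> and \<open>b\<close>, its integral over
  \<open>[a,b]\<close> is therefore zero. Joint convexity bounds the difference of the Lagrangians along \<open>y\<close>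
  and \<open>y\<^sub>*\<close> from below by the first variation, and the Hahn integral over \<open>[a,b]\<close> is monotone
  because \<open>a\<close> and \<open>b\<close> lie on a common orbit: one is \<open>\<sigma>\<^sup>2\<^sup>j\<close> of the other, so the two integrals
  from \<open>\<omega>\<^sub>0\<close> differ by a finite sum of nonnegative terms.\<close>

section \<open>Orbits of the Hahn shift\<close>

lemma hom0_times_one_minus: "q \<noteq> 1 \<Longrightarrow> hom0 q \<omega> * (1 - q) = \<omega>"
  unfolding hom0_def by simp

lemma hsig_eq:
  assumes "q \<noteq> 1"
  shows "hsig q \<omega> x = hom0 q \<omega> + q * (x - hom0 q \<omega>)"
  using hom0_times_one_minus[OF assms, of \<omega>] unfolding hsig_def
  by (simp add: algebra_simps)

lemma hsig_hom0: "q \<noteq> 1 \<Longrightarrow> hsig q \<omega> (hom0 q \<omega>) = hom0 q \<omega>"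
  by (simp add: hsig_eq)

lemma hsig_inv_eq:
  assumes "q \<noteq> 0" "q \<noteq> 1"
  shows "hsig_inv q \<omega> x = hom0 q \<omega> + (x - hom0 q \<omega>) / q"
proof -
  have "x - \<omega> = q * hom0 q \<omega> + (x - hom0 q \<omega>)"
    using hom0_times_one_minus[OF assms(2), of \<omega>] by (simp add: algebra_simps)
  then show ?thesis using assms(1) unfolding hsig_inv_def by (simp only: add_divide_distrib) simp
qed

lemma hsig_funpow:
  assumes "q \<noteq> 1"
  shows "(hsig q \<omega> ^^ n) x = hom0 q \<omega> + q ^ n * (x - hom0 q \<omega>)"
  by (induction n) (simp_all add: hsig_eq[OF assms])

lemma hsig_hsig_inv: "q \<noteq> 0 \<Longrightarrow> hsig q \<omega> (hsig_inv q \<omega> t) = t"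
  unfolding hsig_def hsig_inv_def by simp

lemma hsig_inv_hsig: "q \<noteq> 0 \<Longrightarrow> hsig_inv q \<omega> (hsig q \<omega> t) = t"
  unfolding hsig_def hsig_inv_def by simp

lemma hsig_inv_minus_hsig:
  assumes "q \<noteq> 0" "q \<noteq> 1"
  shows "hsig_inv q \<omega> x - hsig q \<omega> x = (1 / q - q) * (x - hom0 q \<omega>)"
  using assms by (simp add: hsig_inv_eq hsig_eq algebra_simps diff_divide_distrib)

lemma hsig_funpow_eq_hom0_iff:
  assumes "q \<noteq> 0" "q \<noteq> 1"
  shows "(hsig q \<omega> ^^ n) x = hom0 q \<omega> \<longleftrightarrow> x = hom0 q \<omega>"
  using assms by (simp add: hsig_funpow)

lemma one_div_minus_pos: "0 < q \<Longrightarrow> q < 1 \<Longrightarrow> 0 < 1 / q - (q::real)"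
  by (simp add: field_simps mult_strict_mono' power2_eq_square[symmetric] power_less_one_iff)

lemma hsig_funpow_in_interval:
  assumes "is_interval I" "hom0 q \<omega> \<in> I" "x \<in> I" "0 \<le> q" "q < 1"
  shows "(hsig q \<omega> ^^ n) x \<in> I"
proof (induction n)
  case (Suc n)
  have "convex I" using assms(1) by (simp add: is_interval_convex_1)
  from convexD_alt[OF this assms(2) Suc assms(4)] assms(5)
  show ?case by (simp add: hsig_eq algebra_simps)
qed (simp add: assms(3))

lemma hsig_funpow_LIMSEQ:
  assumes "0 < q" "q < 1"
  shows "(\<lambda>n. (hsig q \<omega> ^^ n) x) \<longlonglongrightarrow> hom0 q \<omega>"
proof -
  have "(\<lambda>n. hom0 q \<omega> + q ^ n * (x - hom0 q \<omega>)) \<longlonglongrightarrow> hom0 q \<omega> + 0 * (x - hom0 q \<omega>)"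
    using assms by (intro tendsto_intros LIMSEQ_power_zero) simp
  then show ?thesis using assms by (simp add: hsig_funpow)
qed

lemma continuous_along_hsig_orbit:
  assumes "0 < q" "q < 1" "is_interval I" "hom0 q \<omega> \<in> I" "x \<in> I"
    and "continuous (at (hom0 q \<omega>) within I) f" "strict_mono r"
  shows "(\<lambda>n. f ((hsig q \<omega> ^^ r n) x)) \<longlonglongrightarrow> f (hom0 q \<omega>)"
  using continuous_within_tendsto_compose[OF assms(6) _
          LIMSEQ_subseq_LIMSEQ[OF hsig_funpow_LIMSEQ[OF assms(1,2)] assms(7)]]
    hsig_funpow_in_interval[OF assms(3-5)] assms(1,2)
  by (simp add: o_def)

lemma qint_subset_interval:
  assumes "0 < q" "q < 1" "is_interval I" "hom0 q \<omega> \<in> I" "a \<in> I" "b \<in> I"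
  shows "qint q \<omega> a b \<subseteq> I"
  using hsig_funpow_in_interval[OF assms(3,4) _ _ assms(2)] assms(1,4-6)
  unfolding qint_def qset_def by (auto simp del: funpow.simps)

section \<open>Summability and linearity of the Hahn integral\<close>

definition hahn_summable :: "real \<Rightarrow> real \<Rightarrow> (real \<Rightarrow> real) \<Rightarrow> real \<Rightarrow> bool" where
  "hahn_summable q \<omega> F x \<longleftrightarrow> summable (\<lambda>n. q ^ (2 * n + 1) * F ((hsig q \<omega> ^^ (2 * n + 1)) x))"

lemma summable_odd_powers_times_bounded:
  fixes q :: real
  assumes "0 < q" "q < 1" "Bseq f"
  shows "summable (\<lambda>n. q ^ (2 * n + 1) * f n)"
proof -
  obtain B where B: "\<forall>n. norm (f n) \<le> B" using BseqE[OF assms(3)] by blast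
  have geom: "summable (\<lambda>n. B * q * (q ^ 2) ^ n)"
    using assms(1,2) by (intro summable_mult summable_geometric) (simp add: power_less_one_iff)
  show ?thesis
  proof (rule summable_comparison_test'[OF geom])
    fix n
    have "norm (q ^ (2 * n + 1) * f n) = q ^ (2 * n + 1) * norm (f n)"
      using assms(1) by (simp add: abs_mult)
    also have "\<dots> \<le> q ^ (2 * n + 1) * B" using B assms(1) by (intro mult_left_mono) auto
    also have "\<dots> = B * q * (q ^ 2) ^ n" by (simp add: power_mult[symmetric] algebra_simps)
    finally show "norm (q ^ (2 * n + 1) * f n) \<le> B * q * (q ^ 2) ^ n" .
  qed
qed

lemma hahn_summable_continuous:
  assumes "0 < q" "q < 1" "is_interval I" "hom0 q \<omega> \<in> I" "x \<in> I"
    and "continuous (at (hom0 q \<omega>) within I) F"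
  shows "hahn_summable q \<omega> F x"
proof -
  have "strict_mono (\<lambda>n::nat. 2 * n + 1)" by (intro strict_monoI) simp
  from continuous_along_hsig_orbit[OF assms this]
  show ?thesis unfolding hahn_summable_def
    using assms(1,2) by (intro summable_odd_powers_times_bounded convergent_imp_Bseq convergentI)
qed

lemma hahn_summable_hom0:
  assumes "0 < q" "q < 1"
  shows "hahn_summable q \<omega> F (hom0 q \<omega>)"
  unfolding hahn_summable_def using assms
  by (intro summable_odd_powers_times_bounded) (simp_all add: hsig_funpow)

lemma hahn_int0_hom0: "0 < q \<Longrightarrow> q < 1 \<Longrightarrow> hahn_int0 q \<omega> F (hom0 q \<omega>) = 0"
  unfolding hahn_int0_def by (simp add: hsig_inv_minus_hsig)

lemma hsig_odd_funpow_mem_qset: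
  assumes "0 < q" "q < 1" "x \<noteq> hom0 q \<omega>"
  shows "(hsig q \<omega> ^^ (2 * n + 1)) x \<in> qset q \<omega> x - {hom0 q \<omega>}"
  using assms hsig_funpow_eq_hom0_iff[where n="2 * n + 1" and x=x] unfolding qset_def by auto

text \<open>Only values off \<open>\<omega>\<^sub>0\<close> matter (at \<open>x = \<omega>\<^sub>0\<close> the prefactor of \<open>hahn_int0\<close> vanishes),
  so the value of \<open>hahnD\<close> at \<open>\<omega>\<^sub>0\<close>, chosen there by \<open>SOME\<close>, never enters.\<close>

lemma hahn_summable_cong:
  assumes "0 < q" "q < 1" "\<forall>t\<in>qset q \<omega> x - {hom0 q \<omega>}. F t = G t"
  shows "hahn_summable q \<omega> F x \<longleftrightarrow> hahn_summable q \<omega> G x"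
proof (cases "x = hom0 q \<omega>")
  case False
  with assms have "F ((hsig q \<omega> ^^ (2 * n + 1)) x) = G ((hsig q \<omega> ^^ (2 * n + 1)) x)" for n
    using hsig_odd_funpow_mem_qset by blast
  then show ?thesis unfolding hahn_summable_def by simp
qed (simp add: hahn_summable_hom0 assms(1,2))

lemma hahn_int0_cong:
  assumes "0 < q" "q < 1" "\<forall>t\<in>qset q \<omega> x - {hom0 q \<omega>}. F t = G t"
  shows "hahn_int0 q \<omega> F x = hahn_int0 q \<omega> G x"
proof (cases "x = hom0 q \<omega>")
  case False
  with assms have "F ((hsig q \<omega> ^^ (2 * n + 1)) x) = G ((hsig q \<omega> ^^ (2 * n + 1)) x)" for n
    using hsig_odd_funpow_mem_qset by blast
  then show ?thesis unfolding hahn_int0_def by simp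
qed (simp add: hahn_int0_hom0 assms(1,2))

lemma hahn_summable_diff:
  "hahn_summable q \<omega> F x \<Longrightarrow> hahn_summable q \<omega> G x \<Longrightarrow> hahn_summable q \<omega> (\<lambda>t. F t - G t) x"
  unfolding hahn_summable_def by (drule (1) summable_diff) (simp add: right_diff_distrib)

lemma hahn_int0_diff:
  assumes "hahn_summable q \<omega> F x" "hahn_summable q \<omega> G x"
  shows "hahn_int0 q \<omega> (\<lambda>t. F t - G t) x = hahn_int0 q \<omega> F x - hahn_int0 q \<omega> G x"
  unfolding hahn_int0_def right_diff_distrib suminf_diff[OF assms[unfolded hahn_summable_def], symmetric] ..

lemma hahn_int_diff:
  assumes "hahn_summable q \<omega> F a" "hahn_summable q \<omega> G a"
    and "hahn_summable q \<omega> F b" "hahn_summable q \<omega> G b"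
  shows "hahn_int q \<omega> (\<lambda>t. F t - G t) a b = hahn_int q \<omega> F a b - hahn_int q \<omega> G a b"
  using assms by (simp add: hahn_int_def hahn_int0_diff)

section \<open>The fundamental theorem of Hahn calculus\<close>

lemma hahnD_mult:
  assumes "t \<noteq> hom0 q \<omega>"
  shows "hahnD q \<omega> I (\<lambda>\<tau>. u \<tau> * h \<tau>) t
       = hahnD q \<omega> I u t * h (hsig q \<omega> t) + u (hsig_inv q \<omega> t) * hahnD q \<omega> I h t"
  using assms unfolding hahnD_def by (simp add: diff_divide_distrib add_divide_distrib algebra_simps)

lemma hahnD_diff:
  assumes "t \<noteq> hom0 q \<omega>"
  shows "hahnD q \<omega> I (\<lambda>\<tau>. u \<tau> - h \<tau>) t = hahnD q \<omega> I u t - hahnD q \<omega> I h t"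
  using assms unfolding hahnD_def by (simp add: diff_divide_distrib)

lemma hahnD_odd_funpow_sums:
  assumes q: "0 < q" "q < 1" and I: "is_interval I" "hom0 q \<omega> \<in> I"
    and x: "x \<in> I" "x \<noteq> hom0 q \<omega>" and g: "continuous (at (hom0 q \<omega>) within I) g"
  shows "(\<lambda>n. q ^ (2 * n + 1) * hahnD q \<omega> I g ((hsig q \<omega> ^^ (2 * n + 1)) x))
           sums ((g x - g (hom0 q \<omega>)) / (hsig_inv q \<omega> x - hsig q \<omega> x))"
proof -
  define s where "s n = (hsig q \<omega> ^^ (2 * n)) x" for n
  define K where "K = hsig_inv q \<omega> x - hsig q \<omega> x"
  have qn: "q \<noteq> 0" "q \<noteq> 1" using q by auto
  have "K \<noteq> 0"
    unfolding K_def hsig_inv_minus_hsig[OF qn] using one_div_minus_pos[OF q] x(2) by simp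
  have s_step: "s (Suc n) - s n = - K * q ^ (2 * n + 1)" for n
    unfolding s_def K_def hsig_inv_minus_hsig[OF qn] hsig_funpow[OF qn(2)] using qn
    by (simp add: field_simps)
  have scaled_term: "K * (q ^ (2 * n + 1) * hahnD q \<omega> I g ((hsig q \<omega> ^^ (2 * n + 1)) x))
      = g (s n) - g (s (Suc n))" for n
  proof -
    have "(hsig q \<omega> ^^ (2 * n + 1)) x = hsig q \<omega> (s n)" by (simp add: s_def)
    moreover have "hsig q \<omega> (hsig q \<omega> (s n)) = s (Suc n)" by (simp add: s_def)
    moreover have "hsig q \<omega> (s n) \<noteq> hom0 q \<omega>"
      using hsig_funpow_eq_hom0_iff[OF qn, where n="Suc (2 * n)"] x(2) by (simp add: s_def)
    ultimately have "hahnD q \<omega> I g ((hsig q \<omega> ^^ (2 * n + 1)) x)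
        = (g (s (Suc n)) - g (s n)) / (s (Suc n) - s n)"
      unfolding hahnD_def by (simp add: hsig_inv_hsig[OF qn(1)])
    moreover have "s (Suc n) - s n \<noteq> 0" using \<open>K \<noteq> 0\<close> q by (simp add: s_step)
    ultimately show ?thesis by (simp add: s_step mult.assoc[symmetric])
  qed
  have "(\<lambda>n. g (s n)) \<longlonglongrightarrow> g (hom0 q \<omega>)"
    unfolding s_def by (rule continuous_along_hsig_orbit[OF q I x(1) g]) (simp add: strict_mono_def)
  from telescope_sums'[OF this] have "(\<lambda>n. K * (q ^ (2 * n + 1) * hahnD q \<omega> I g ((hsig q \<omega> ^^ (2 * n + 1)) x)))
      sums (g x - g (hom0 q \<omega>))"
    unfolding scaled_term by (simp add: s_def)
  from sums_mult_D[OF this \<open>K \<noteq> 0\<close>] show ?thesis unfolding K_def .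
qed

lemma hahn_int0_hahnD:
  assumes q: "0 < q" "q < 1" and I: "is_interval I" "hom0 q \<omega> \<in> I"
    and x: "x \<in> I" and g: "continuous (at (hom0 q \<omega>) within I) g"
  shows "hahn_summable q \<omega> (hahnD q \<omega> I g) x"
    and "hahn_int0 q \<omega> (hahnD q \<omega> I g) x = g x - g (hom0 q \<omega>)"
proof -
  have "hahn_summable q \<omega> (hahnD q \<omega> I g) x
        \<and> hahn_int0 q \<omega> (hahnD q \<omega> I g) x = g x - g (hom0 q \<omega>)"
  proof (cases "x = hom0 q \<omega>")
    case False
    have "hsig_inv q \<omega> x - hsig q \<omega> x \<noteq> 0"
      using q False one_div_minus_pos[OF q] by (simp add: hsig_inv_minus_hsig)
    with hahnD_odd_funpow_sums[OF q I x False g] show ?thesis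
      unfolding hahn_summable_def hahn_int0_def by (auto simp: sums_iff)
  qed (simp add: q hahn_summable_hom0 hahn_int0_hom0)
  then show "hahn_summable q \<omega> (hahnD q \<omega> I g) x"
    and "hahn_int0 q \<omega> (hahnD q \<omega> I g) x = g x - g (hom0 q \<omega>)" by auto
qed

section \<open>Monotonicity of the Hahn integral along an orbit\<close>

lemma hahn_int0_minus_funpow:
  assumes q: "0 < q" "q < 1" and F: "hahn_summable q \<omega> F x"
  shows "hahn_int0 q \<omega> F x - hahn_int0 q \<omega> F ((hsig q \<omega> ^^ (2 * j)) x)
       = (hsig_inv q \<omega> x - hsig q \<omega> x) * (\<Sum>n<j. q ^ (2 * n + 1) * F ((hsig q \<omega> ^^ (2 * n + 1)) x))"
proof -
  define f where "f n = q ^ (2 * n + 1) * F ((hsig q \<omega> ^^ (2 * n + 1)) x)" for n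
  define z where "z = (hsig q \<omega> ^^ (2 * j)) x"
  have qn: "q \<noteq> 0" "q \<noteq> 1" using q by auto
  have f_shift: "f (n + j) = q ^ (2 * j) * (q ^ (2 * n + 1) * F ((hsig q \<omega> ^^ (2 * n + 1)) z))" for n
  proof -
    have "2 * (n + j) + 1 = (2 * n + 1) + 2 * j" by simp
    then have "(hsig q \<omega> ^^ (2 * (n + j) + 1)) x = (hsig q \<omega> ^^ (2 * n + 1)) z"
      unfolding z_def by (simp only: funpow_add o_apply)
    then show ?thesis unfolding f_def by (simp add: power_add)
  qed
  have "summable f" using F unfolding hahn_summable_def f_def .
  then have "summable (\<lambda>n. f (n + j))" by (rule summable_ignore_initial_segment)
  then have "summable (\<lambda>n. q ^ (2 * n + 1) * F ((hsig q \<omega> ^^ (2 * n + 1)) z))"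
    using qn by (simp add: f_shift summable_cmult_iff)
  then have "hahn_int0 q \<omega> F z = (hsig_inv q \<omega> x - hsig q \<omega> x) * (\<Sum>n. f (n + j))"
    unfolding hahn_int0_def f_shift using qn
    by (simp add: suminf_mult hsig_inv_minus_hsig z_def hsig_funpow)
  with suminf_split_initial_segment[OF \<open>summable f\<close>, of j] show ?thesis
    unfolding hahn_int0_def f_def[symmetric] z_def[symmetric] by (simp add: algebra_simps)
qed

lemma hahn_int0_times_dist_nonneg:
  assumes q: "0 < q" "q < 1" and F: "hahn_summable q \<omega> F x"
    and nonneg: "\<forall>n. 0 \<le> F ((hsig q \<omega> ^^ (2 * n + 1)) x)"
  shows "0 \<le> hahn_int0 q \<omega> F x * (x - hom0 q \<omega>)"
proof -
  define S where "S = (\<Sum>n. q ^ (2 * n + 1) * F ((hsig q \<omega> ^^ (2 * n + 1)) x))"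
  have "0 \<le> S"
    using F nonneg q unfolding hahn_summable_def S_def by (intro suminf_nonneg) auto
  moreover have "hahn_int0 q \<omega> F x * (x - hom0 q \<omega>) = (1 / q - q) * S * (x - hom0 q \<omega>)\<^sup>2"
    using q unfolding hahn_int0_def S_def[symmetric]
    by (simp add: hsig_inv_minus_hsig power2_eq_square)
  ultimately show ?thesis using one_div_minus_pos[OF q] by simp
qed

lemma hahn_int0_minus_funpow_times_diff_nonneg:
  assumes q: "0 < q" "q < 1" and F: "hahn_summable q \<omega> F x"
    and nonneg: "\<forall>n. 0 \<le> F ((hsig q \<omega> ^^ (2 * n + 1)) x)"
  shows "0 \<le> (hahn_int0 q \<omega> F x - hahn_int0 q \<omega> F ((hsig q \<omega> ^^ (2 * j)) x))
               * (x - (hsig q \<omega> ^^ (2 * j)) x)"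
proof -
  define S where "S = (\<Sum>n<j. q ^ (2 * n + 1) * F ((hsig q \<omega> ^^ (2 * n + 1)) x))"
  have "0 \<le> S" using nonneg q unfolding S_def by (intro sum_nonneg) auto
  moreover have "q ^ (2 * j) \<le> 1" using q by (simp add: power_le_one)
  moreover have "(hahn_int0 q \<omega> F x - hahn_int0 q \<omega> F ((hsig q \<omega> ^^ (2 * j)) x))
               * (x - (hsig q \<omega> ^^ (2 * j)) x)
      = (1 / q - q) * S * (1 - q ^ (2 * j)) * (x - hom0 q \<omega>)\<^sup>2"
    using q unfolding hahn_int0_minus_funpow[OF q F] S_def[symmetric]
    by (simp add: hsig_inv_minus_hsig hsig_funpow power2_eq_square algebra_simps add_divide_distrib)
  ultimately show ?thesis using one_div_minus_pos[OF q] by simp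
qed

lemma qset_orbit_cases:
  assumes "a \<in> qset q \<omega> c" "b \<in> qset q \<omega> c" "a \<noteq> hom0 q \<omega>" "b \<noteq> hom0 q \<omega>"
  obtains j where "a = (hsig q \<omega> ^^ (2 * j)) b" | j where "b = (hsig q \<omega> ^^ (2 * j)) a"
proof -
  obtain m k where a: "a = (hsig q \<omega> ^^ (2 * m + 1)) c" and b: "b = (hsig q \<omega> ^^ (2 * k + 1)) c"
    using assms unfolding qset_def by blast
  show ?thesis
  proof (cases "k \<le> m")
    case True
    then have "2 * m + 1 = 2 * (m - k) + (2 * k + 1)" by simp
    then have "a = (hsig q \<omega> ^^ (2 * (m - k))) b" unfolding a b by (simp only: funpow_add o_apply)
    then show ?thesis by (rule that(1))
  next
    case False
    then have "2 * k + 1 = 2 * (k - m) + (2 * m + 1)" by simp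
    then have "b = (hsig q \<omega> ^^ (2 * (k - m))) a" unfolding a b by (simp only: funpow_add o_apply)
    then show ?thesis by (rule that(2))
  qed
qed

lemma hahn_int_nonneg:
  assumes q: "0 < q" "q < 1"
    and ab: "a < b" "a \<in> qset q \<omega> c" "b \<in> qset q \<omega> c"
    and F: "hahn_summable q \<omega> F a" "hahn_summable q \<omega> F b"
    and nonneg: "\<forall>t\<in>qint q \<omega> a b - {hom0 q \<omega>}. 0 \<le> F t"
  shows "0 \<le> hahn_int q \<omega> F a b"
proof -
  have orbit_nonneg: "\<forall>n. 0 \<le> F ((hsig q \<omega> ^^ (2 * n + 1)) x)"
    if "x \<in> {a, b}" "x \<noteq> hom0 q \<omega>" for x
    using nonneg hsig_odd_funpow_mem_qset[OF q that(2)] that(1) unfolding qint_def by blast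
  note sign_a = hahn_int0_times_dist_nonneg[OF q F(1) orbit_nonneg]
   and sign_b = hahn_int0_times_dist_nonneg[OF q F(2) orbit_nonneg]
   and step_a = hahn_int0_minus_funpow_times_diff_nonneg[OF q F(1) orbit_nonneg]
   and step_b = hahn_int0_minus_funpow_times_diff_nonneg[OF q F(2) orbit_nonneg]
  consider "a = hom0 q \<omega>" | "b = hom0 q \<omega>"
    | j where "a \<noteq> hom0 q \<omega>" "b \<noteq> hom0 q \<omega>" "a = (hsig q \<omega> ^^ (2 * j)) b"
    | j where "a \<noteq> hom0 q \<omega>" "b \<noteq> hom0 q \<omega>" "b = (hsig q \<omega> ^^ (2 * j)) a"
    using qset_orbit_cases[OF ab(2,3)] by metis
  then show ?thesis
  proof cases
    case 1
    with sign_b ab(1) show ?thesis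
      by (simp add: hahn_int_def hahn_int0_hom0 q zero_le_mult_iff)
  next
    case 2
    with sign_a ab(1) show ?thesis
      by (simp add: hahn_int_def hahn_int0_hom0 q zero_le_mult_iff)
  next
    case 3
    with step_b[of j] ab(1) show ?thesis
      by (simp add: hahn_int_def zero_le_mult_iff)
  next
    case 4
    with step_a[of j] ab(1) show ?thesis
      by (simp add: hahn_int_def zero_le_mult_iff)
  qed
qed

lemma hahn_int_mono:
  assumes q: "0 < q" "q < 1"
    and ab: "a < b" "a \<in> qset q \<omega> c" "b \<in> qset q \<omega> c"
    and F: "hahn_summable q \<omega> F a" "hahn_summable q \<omega> F b"
    and G: "hahn_summable q \<omega> G a" "hahn_summable q \<omega> G b"
    and le: "\<forall>t\<in>qint q \<omega> a b - {hom0 q \<omega>}. F t \<le> G t"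
  shows "hahn_int q \<omega> F a b \<le> hahn_int q \<omega> G a b"
proof -
  have "0 \<le> hahn_int q \<omega> (\<lambda>t. G t - F t) a b"
    using le by (intro hahn_int_nonneg[OF q ab] hahn_summable_diff F G) auto
  then show ?thesis by (simp add: hahn_int_diff F G)
qed

section \<open>The first variation\<close>

lemma continuous_within_compose_hsig:
  assumes q: "0 < q" "q < 1" and I: "is_interval I" "hom0 q \<omega> \<in> I"
    and Q: "continuous (at (hom0 q \<omega>) within I) Q"
  shows "continuous (at (hom0 q \<omega>) within I) (\<lambda>t. Q (hsig q \<omega> t))"
proof -
  have "hsig q \<omega> ` I \<subseteq> I"
    using hsig_funpow_in_interval[OF I _ _ q(2), where n=1] q by auto
  moreover have "continuous (at (hom0 q \<omega>) within I) (hsig q \<omega>)"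
    unfolding hsig_def by (intro continuous_intros)
  moreover have "continuous (at (hsig q \<omega> (hom0 q \<omega>)) within hsig q \<omega> ` I) Q"
    using continuous_within_subset[OF Q calculation(1)] q by (simp add: hsig_hom0)
  ultimately show ?thesis using continuous_within_compose by (auto simp: o_def)
qed

lemma hahn_int_first_variation_eq_0:
  assumes q: "0 < q" "q < 1" and I: "is_interval I" "hom0 q \<omega> \<in> I" and ab: "a \<in> I" "b \<in> I"
    and EL: "\<forall>t\<in>qint q \<omega> a b. P t = hahnD q \<omega> I (\<lambda>\<tau>. Q (hsig q \<omega> \<tau>)) t"
    and Q: "continuous (at (hom0 q \<omega>) within I) Q"
    and h: "continuous (at (hom0 q \<omega>) within I) h" "h a = 0" "h b = 0"
  defines "V \<equiv> \<lambda>t. P t * h (hsig q \<omega> t) + Q t * hahnD q \<omega> I h t"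
  shows "hahn_summable q \<omega> V a" "hahn_summable q \<omega> V b" "hahn_int q \<omega> V a b = 0"
proof -
  define g where "g \<tau> = Q (hsig q \<omega> \<tau>) * h \<tau>" for \<tau>
  have g_cont: "continuous (at (hom0 q \<omega>) within I) g"
    unfolding g_def by (intro continuous_intros continuous_within_compose_hsig[OF q I Q] h(1))
  have endpoint: "hahn_summable q \<omega> V x \<and> hahn_int0 q \<omega> V x = - g (hom0 q \<omega>)"
    if x: "x \<in> {a, b}" for x
  proof -
    have "hahnD q \<omega> I g t = V t" if t: "t \<in> qset q \<omega> x - {hom0 q \<omega>}" for t
    proof -
      have "t \<in> qint q \<omega> a b" using t x unfolding qint_def by blast
      then have "P t = hahnD q \<omega> I (\<lambda>\<tau>. Q (hsig q \<omega> \<tau>)) t" using EL by blast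
      moreover have "hsig q \<omega> (hsig_inv q \<omega> t) = t" using q by (simp add: hsig_hsig_inv)
      ultimately show ?thesis
        using t unfolding g_def V_def by (simp add: hahnD_mult)
    qed
    then have "hahn_summable q \<omega> (hahnD q \<omega> I g) x = hahn_summable q \<omega> V x"
      and "hahn_int0 q \<omega> (hahnD q \<omega> I g) x = hahn_int0 q \<omega> V x"
      by (simp_all add: hahn_summable_cong[OF q] hahn_int0_cong[OF q])
    moreover have "x \<in> I" "g x = 0" using x ab h(2,3) by (auto simp: g_def)
    ultimately show ?thesis using hahn_int0_hahnD[OF q I _ g_cont] by simp
  qed
  then show "hahn_summable q \<omega> V a" "hahn_summable q \<omega> V b" "hahn_int q \<omega> V a b = 0"
    by (auto simp: hahn_int_def)
qed

lemma jointly_convexD: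
  assumes "jointly_convex I L" "t \<in> I"
  shows "part2 L t u v * (u' - u) + part3 L t u v * (v' - v) \<le> L t u' v' - L t u v"
proof -
  have "part2 L t u v * (u' - u) + part3 L t u v * (v' - v) \<le> L t (u + (u' - u)) (v + (v' - v)) - L t u v"
    using assms unfolding jointly_convex_def by blast
  then show ?thesis by simp
qed

lemma jointly_concaveD:
  assumes "jointly_concave I L" "t \<in> I"
  shows "L t u' v' - L t u v \<le> part2 L t u v * (u' - u) + part3 L t u v * (v' - v)"
proof -
  have "L t (u + (u' - u)) (v + (v' - v)) - L t u v \<le> part2 L t u v * (u' - u) + part3 L t u v * (v' - v)"
    using assms unfolding jointly_concave_def by blast
  then show ?thesis by simp
qed

lemma functionalL_compare_Euler_Lagrange:
  assumes q: "0 < q" "q < 1" and I: "is_interval I" "hom0 q \<omega> \<in> I"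
    and ab: "a \<in> I" "b \<in> I" "a < b" "a \<in> qset q \<omega> c" "b \<in> qset q \<omega> c"
    and EL: "\<forall>t\<in>qint q \<omega> a b.
               part2 L t (ystar (hsig q \<omega> t)) (hahnD q \<omega> I ystar t) =
               hahnD q \<omega> I (\<lambda>\<tau>. part3 L (hsig q \<omega> \<tau>) (ystar (hsig q \<omega> (hsig q \<omega> \<tau>)))
                                    (hahnD q \<omega> I ystar (hsig q \<omega> \<tau>))) t"
    and cont: "continuous (at (hom0 q \<omega>) within I) y"
      "continuous (at (hom0 q \<omega>) within I) ystar"
      "continuous (at (hom0 q \<omega>) within I) (\<lambda>t. part3 L t (ystar (hsig q \<omega> t)) (hahnD q \<omega> I ystar t))"
      "continuous (at (hom0 q \<omega>) within I) (\<lambda>t. L t (y (hsig q \<omega> t)) (hahnD q \<omega> I y t))"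
      "continuous (at (hom0 q \<omega>) within I) (\<lambda>t. L t (ystar (hsig q \<omega> t)) (hahnD q \<omega> I ystar t))"
    and ends: "y a = ystar a" "y b = ystar b"
  shows "(jointly_convex I L \<longrightarrow> functionalL q \<omega> I L a b ystar \<le> functionalL q \<omega> I L a b y) \<and>
         (jointly_concave I L \<longrightarrow> functionalL q \<omega> I L a b ystar \<ge> functionalL q \<omega> I L a b y)"
proof -
  let ?Lag = "\<lambda>y t. L t (y (hsig q \<omega> t)) (hahnD q \<omega> I y t)"
  let ?\<Delta> = "\<lambda>t. ?Lag y t - ?Lag ystar t"
  let ?V = "\<lambda>t. part2 L t (ystar (hsig q \<omega> t)) (hahnD q \<omega> I ystar t) * (y (hsig q \<omega> t) - ystar (hsig q \<omega> t))
              + part3 L t (ystar (hsig q \<omega> t)) (hahnD q \<omega> I ystar t) * hahnD q \<omega> I (\<lambda>\<tau>. y \<tau> - ystar \<tau>) t"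
  have V: "hahn_summable q \<omega> ?V a" "hahn_summable q \<omega> ?V b" "hahn_int q \<omega> ?V a b = 0"
    using hahn_int_first_variation_eq_0[OF q I ab(1,2) EL cont(3), where h="\<lambda>\<tau>. y \<tau> - ystar \<tau>"]
      cont(1,2) ends by (auto intro: continuous_intros)
  have \<Delta>: "hahn_summable q \<omega> (?Lag y) x" "hahn_summable q \<omega> (?Lag ystar) x" if "x \<in> {a, b}" for x
    using hahn_summable_continuous[OF q I _ cont(4)] hahn_summable_continuous[OF q I _ cont(5)]
      ab(1,2) that by auto
  have functional_diff:
    "functionalL q \<omega> I L a b y - functionalL q \<omega> I L a b ystar = hahn_int q \<omega> ?\<Delta> a b"
    unfolding functionalL_def using \<Delta> by (simp add: hahn_int_diff)
  have off_hom0: "t \<in> I \<and> hahnD q \<omega> I (\<lambda>\<tau>. y \<tau> - ystar \<tau>) t = hahnD q \<omega> I y t - hahnD q \<omega> I ystar t"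
    if "t \<in> qint q \<omega> a b - {hom0 q \<omega>}" for t
    using that qint_subset_interval[OF q I ab(1,2)] by (auto simp: hahnD_diff)
  note mono = hahn_int_mono[OF q ab(3-5)]
  show ?thesis
  proof (intro conjI impI)
    assume "jointly_convex I L"
    then have "hahn_int q \<omega> ?V a b \<le> hahn_int q \<omega> ?\<Delta> a b"
      using off_hom0 jointly_convexD by (intro mono V(1,2) hahn_summable_diff \<Delta>) auto
    then show "functionalL q \<omega> I L a b ystar \<le> functionalL q \<omega> I L a b y"
      using V(3) functional_diff by simp
  next
    assume "jointly_concave I L"
    then have "hahn_int q \<omega> ?\<Delta> a b \<le> hahn_int q \<omega> ?V a b"
      using off_hom0 jointly_concaveD by (intro mono V(1,2) hahn_summable_diff \<Delta>) auto
    then show "functionalL q \<omega> I L a b ystar \<ge> functionalL q \<omega> I L a b y"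
      using V(3) functional_diff by simp
  qed
qed

theorem theorem3p11:
  fixes q \<omega> a b c \<alpha> \<beta> :: real and I :: "real set"
    and L :: "real \<Rightarrow> real \<Rightarrow> real \<Rightarrow> real" and ystar :: "real \<Rightarrow> real"
  assumes q: "0 < q" "q < 1" and om: "0 \<le> \<omega>"
    and I: "is_interval I" "hom0 q \<omega> \<in> I"
    and ab: "a \<in> I" "b \<in> I" "a < b" "c \<in> I" "a \<in> qset q \<omega> c" "b \<in> qset q \<omega> c"
    and H1: "\<forall>t\<in>I. C1_R2 (\<lambda>p. L t (fst p) (snd p))"
    and H2: "\<forall>y. admissible q \<omega> I a b \<alpha> \<beta> y \<longrightarrow>
               continuous (at (hom0 q \<omega>) within I)
                 (\<lambda>t. L t (y (hsig q \<omega> t)) (hahnD q \<omega> I y t))"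
    and H3: "\<forall>y. admissible q \<omega> I a b \<alpha> \<beta> y \<longrightarrow>
               Y1 q \<omega> I a b (\<lambda>t. part2 L t (y (hsig q \<omega> t)) (hahnD q \<omega> I y t)) \<and>
               Y1 q \<omega> I a b (\<lambda>t. part3 L t (y (hsig q \<omega> t)) (hahnD q \<omega> I y t))"
    and adm: "admissible q \<omega> I a b \<alpha> \<beta> ystar"
    and EL: "\<forall>t\<in>qint q \<omega> a b.
               part2 L t (ystar (hsig q \<omega> t)) (hahnD q \<omega> I ystar t) =
               hahnD q \<omega> I (\<lambda>\<tau>. part3 L (hsig q \<omega> \<tau>) (ystar (hsig q \<omega> (hsig q \<omega> \<tau>)))
                                    (hahnD q \<omega> I ystar (hsig q \<omega> \<tau>))) t"
  shows "(jointly_convex I L \<longrightarrow>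
            (\<forall>y. admissible q \<omega> I a b \<alpha> \<beta> y \<longrightarrow>
                 functionalL q \<omega> I L a b ystar \<le> functionalL q \<omega> I L a b y)) \<and>
         (jointly_concave I L \<longrightarrow>
            (\<forall>y. admissible q \<omega> I a b \<alpha> \<beta> y \<longrightarrow>
                 functionalL q \<omega> I L a b ystar \<ge> functionalL q \<omega> I L a b y))"
proof -
  have "(jointly_convex I L \<longrightarrow> functionalL q \<omega> I L a b ystar \<le> functionalL q \<omega> I L a b y) \<and>
        (jointly_concave I L \<longrightarrow> functionalL q \<omega> I L a b ystar \<ge> functionalL q \<omega> I L a b y)"
    if y: "admissible q \<omega> I a b \<alpha> \<beta> y" for y
    using functionalL_compare_Euler_Lagrange[OF q I ab(1-3,5,6) EL] H2 H3 adm y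
    unfolding admissible_def Y1_def by auto
  then show ?thesis by blast
qed

end
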